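(* Let $\Gamma$ be a hyperbolic graph such that $\operatorname{rank}\mathcal{F}(\Gamma)=20$, and let $D\ge2$. Then the $2D$-polarized lattice $\mathcal{F}_h(\Gamma)$ can be geometric only if $2D=h_\Gamma^2$.
   Context: Graphs are finite, simple. $\mathbb{Z}\Gamma$ is the lattice freely generated by the vertices of $\Gamma$ with $v^2=-2$, $u\cdot v=1$ if $u,v$ adjacent, $0$ otherwise; $\mathcal{F}(\Gamma)=\mathbb{Z}\Gamma/\ker\mathbb{Z}\Gamma$, where $\ker L$ is the kernel of the form. $\mathcal{F}_h(\Gamma)=(\mathbb{Z}\Gamma\oplus\mathbb{Z}h)/\ker$, with $h^2=2D$ and $v\cdot h=1$ for all vertices $v$. $\Gamma$ is hyperbolic if $\mathbb{Z}\Gamma\otimes\mathbb{R}$ has positive inertia index $1$. The intrinsic polarization $h_\Gamma\in\mathbb{Z}\Gamma\otimes\mathbb{Q}$ satisfies $v\cdot h_\Gamma=1$ for all vertices; $h_\Gamma^2$ is well defined when it exists. A $2D$-polarized lattice $(S,h)$ (nondegenerate, hyperbolic, $h\in S$, $h^2=2D$) is admissible if it contains no vector $e$ with $e^2=-2$, $e\cdot h=0$, and no vector $e$ with $e^2=0$, $e\cdot h=2$; it is geometric if it is admissible and admits a primitive embedding into the $K3$ lattice $\mathbf{L}=\mathbf U^3\oplus\mathbf E_8(-1)^2$ (the unique even unimodular lattice of rank $22$ and signature $-16$). *)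

theory Defs
  imports Complex_Main
begin

text \<open>A (possibly degenerate) integral lattice is represented as Z^I for a finite index
set I, with symmetric bilinear form given by a Gram function G. Vectors are functions
on the index type; only their values on I matter.\<close>

definition bform :: "('i \<Rightarrow> 'i \<Rightarrow> int) \<Rightarrow> 'i set \<Rightarrow> ('i \<Rightarrow> 'r::comm_ring_1) \<Rightarrow> ('i \<Rightarrow> 'r) \<Rightarrow> 'r" where
  "bform G I x y = (\<Sum>i\<in>I. \<Sum>j\<in>I. x i * of_int (G i j) * y j)"

definition unitv :: "'i \<Rightarrow> 'i \<Rightarrow> 'r::zero_neq_one" where
  "unitv v = (\<lambda>i. if i = v then 1 else 0)"

text \<open>Rank of the quotient lattice Z^I / ker: the maximal number of elements of Z^I
whose images in the quotient are Z-linearly independent.\<close>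
definition lat_rank :: "('i \<Rightarrow> 'i \<Rightarrow> int) \<Rightarrow> 'i set \<Rightarrow> nat" where
  "lat_rank G I = (GREATEST k. \<exists>xs :: nat \<Rightarrow> 'i \<Rightarrow> int.
      \<forall>c :: nat \<Rightarrow> int.
        (\<forall>y. bform G I (\<lambda>i. \<Sum>j<k. c j * xs j i) y = 0) \<longrightarrow> (\<forall>j<k. c j = 0))"

text \<open>Positive inertia index of the real form on Z^I \<otimes> R: the maximal dimension
of a subspace on which the form is positive definite.\<close>
definition pos_index :: "('i \<Rightarrow> 'i \<Rightarrow> int) \<Rightarrow> 'i set \<Rightarrow> nat" where
  "pos_index G I = (GREATEST k. \<exists>xs :: nat \<Rightarrow> 'i \<Rightarrow> real.
      \<forall>c :: nat \<Rightarrow> real. (\<exists>j<k. c j \<noteq> 0) \<longrightarrow>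
        bform G I (\<lambda>i. \<Sum>j<k. c j * xs j i) (\<lambda>i. \<Sum>j<k. c j * xs j i) > 0)"

definition ggram :: "('a \<Rightarrow> 'a \<Rightarrow> bool) \<Rightarrow> 'a \<Rightarrow> 'a \<Rightarrow> int" where
  "ggram E u v = (if u = v then -2 else if E u v then 1 else 0)"

text \<open>Index None stands for h, Some v for the vertex v.\<close>
definition hgram :: "('a \<Rightarrow> 'a \<Rightarrow> bool) \<Rightarrow> int \<Rightarrow> 'a option \<Rightarrow> 'a option \<Rightarrow> int" where
  "hgram E D p q = (case (p, q) of
       (None, None) \<Rightarrow> 2 * D
     | (None, Some _) \<Rightarrow> 1
     | (Some _, None) \<Rightarrow> 1
     | (Some u, Some v) \<Rightarrow> ggram E u v)"

definition hindex :: "'a set \<Rightarrow> 'a option set" where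
  "hindex V = insert None (Some ` V)"

section \<open>The K3 lattice U^3 + E8(-1)^2 on indices 0..21\<close>

definition e8adj :: "nat \<Rightarrow> nat \<Rightarrow> bool" where
  "e8adj a b = ((a \<le> 6 \<and> b \<le> 6 \<and> (a = b + 1 \<or> b = a + 1)) \<or> {a, b} = {4, 7})"

definition e8m :: "nat \<Rightarrow> nat \<Rightarrow> int" where
  "e8m a b = (if a = b then -2 else if e8adj a b then 1 else 0)"

definition k3gram :: "nat \<Rightarrow> nat \<Rightarrow> int" where
  "k3gram i j =
     (if i < 6 \<and> j < 6 then (if i div 2 = j div 2 \<and> i \<noteq> j then 1 else 0)
      else if 6 \<le> i \<and> i < 14 \<and> 6 \<le> j \<and> j < 14 then e8m (i - 6) (j - 6)
      else if 14 \<le> i \<and> i < 22 \<and> 14 \<le> j \<and> j < 22 then e8m (i - 14) (j - 14)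
      else 0)"

definition inL :: "(nat \<Rightarrow> int) \<Rightarrow> bool" where
  "inL y = (\<forall>k. k \<ge> 22 \<longrightarrow> y k = 0)"

text \<open>The polarized lattice is S = Z^I / ker with polarization the image of hv.
S is nondegenerate by construction; hyperbolicity of S is that of Z^I \<otimes> R.\<close>
definition polarized :: "('i \<Rightarrow> 'i \<Rightarrow> int) \<Rightarrow> 'i set \<Rightarrow> ('i \<Rightarrow> int) \<Rightarrow> int \<Rightarrow> bool" where
  "polarized G I hv D = (finite I \<and> pos_index G I = 1 \<and> bform G I hv hv = 2 * D)"

text \<open>Vectors of S are images of vectors of Z^I, so conditions on S lift to Z^I.\<close>
definition admissible :: "('i \<Rightarrow> 'i \<Rightarrow> int) \<Rightarrow> 'i set \<Rightarrow> ('i \<Rightarrow> int) \<Rightarrow> int \<Rightarrow> bool" where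
  "admissible G I hv D = (polarized G I hv D \<and>
     \<not> (\<exists>e. bform G I e e = -2 \<and> bform G I e hv = 0) \<and>
     \<not> (\<exists>e. bform G I e e = 0 \<and> bform G I e hv = 2))"

text \<open>A primitive embedding S \<rightarrow> L is given by images f i \<in> L of the generators,
preserving the form, vanishing on the kernel (so it descends to S; injectivity on S
is then automatic), with primitive image.\<close>
definition prim_embeds_K3 :: "('i \<Rightarrow> 'i \<Rightarrow> int) \<Rightarrow> 'i set \<Rightarrow> bool" where
  "prim_embeds_K3 G I = (\<exists>f :: 'i \<Rightarrow> nat \<Rightarrow> int.
     (\<forall>i\<in>I. inL (f i)) \<and>
     (\<forall>i\<in>I. \<forall>j\<in>I. bform k3gram {..<22} (f i) (f j) = G i j) \<and>
     (\<forall>x. (\<forall>y. bform G I x y = 0) \<longrightarrow> (\<lambda>k. \<Sum>i\<in>I. x i * f i k) = (\<lambda>k. 0)) \<and>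
     (\<forall>y n. inL y \<and> n \<noteq> (0::int) \<and> (\<exists>x. (\<lambda>k. n * y k) = (\<lambda>k. \<Sum>i\<in>I. x i * f i k))
        \<longrightarrow> (\<exists>x. y = (\<lambda>k. \<Sum>i\<in>I. x i * f i k))))"

definition geometric :: "('i \<Rightarrow> 'i \<Rightarrow> int) \<Rightarrow> 'i set \<Rightarrow> ('i \<Rightarrow> int) \<Rightarrow> int \<Rightarrow> bool" where
  "geometric G I hv D = (admissible G I hv D \<and> prim_embeds_K3 G I)"

end

theory Submission
  imports Defs
begin

text \<open>If the intrinsic polarization does not exist, no kernel vector of Z\<Gamma> + Zh involves h
(a kernel vector m h + x with m \<noteq> 0 would give h_\<Gamma> = -x/m), so F_h(\<Gamma>) has rank 21.
An isometry F_h(\<Gamma>) \<rightarrow> L = Z^22 maps 21 independent vectors into Z^22; together with the three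
orthogonal vectors e + f of norm 2 in the copies of U they give 24 vectors with at least two
independent relations. These relations exhibit a plane of real combinations of the positive vectors
lying in the image of F_h(\<Gamma>) \<otimes> R, i.e. a positive definite plane in F_h(\<Gamma>) \<otimes> R,
contradicting hyperbolicity.\<close>

definition lat_independent :: "('i \<Rightarrow> 'i \<Rightarrow> int) \<Rightarrow> 'i set \<Rightarrow> nat \<Rightarrow> (nat \<Rightarrow> 'i \<Rightarrow> int) \<Rightarrow> bool" where
  "lat_independent G I k xs \<longleftrightarrow> (\<forall>c :: nat \<Rightarrow> int.
     (\<forall>y. bform G I (\<lambda>i. \<Sum>j<k. c j * xs j i) y = 0) \<longrightarrow> (\<forall>j<k. c j = 0))"

definition positive_family :: "('i \<Rightarrow> 'i \<Rightarrow> int) \<Rightarrow> 'i set \<Rightarrow> nat \<Rightarrow> (nat \<Rightarrow> 'i \<Rightarrow> real) \<Rightarrow> bool" where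
  "positive_family G I k xs \<longleftrightarrow> (\<forall>c :: nat \<Rightarrow> real. (\<exists>j<k. c j \<noteq> 0) \<longrightarrow>
     bform G I (\<lambda>i. \<Sum>j<k. c j * xs j i) (\<lambda>i. \<Sum>j<k. c j * xs j i) > 0)"

lemma sum_lessThan_add_split:
  fixes r :: nat
  shows "(\<Sum>j<n + r. g j) = (\<Sum>j<n. g j) + (\<Sum>t<r. g (n + t))"
  by (induction r) (simp_all add: add.assoc)

lemma exists_nontrivial_relation:
  fixes v :: "'j \<Rightarrow> 'k \<Rightarrow> 'f::idom"
  assumes "finite K" "finite J" "card K < card J"
  shows "\<exists>c. (\<exists>j\<in>J. c j \<noteq> 0) \<and> (\<forall>k\<in>K. (\<Sum>j\<in>J. c j * v j k) = 0)"
  using assms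
proof (induction K arbitrary: J v rule: finite_induct)
  case empty
  then obtain j where "j \<in> J" by fastforce
  then show ?case by (intro exI[of _ "\<lambda>_. 1"]) auto
next
  case (insert k K)
  show ?case
  proof (cases "\<forall>j\<in>J. v j k = 0")
    case True
    with insert show ?thesis by fastforce
  next
    case False
    then obtain j0 where j0: "j0 \<in> J" "v j0 k \<noteq> 0" by auto
    \<comment> \<open>Gaussian elimination: clear coordinate k using the pivot v j0 k.\<close>
    define u where "u j l = v j0 k * v j l - v j k * v j0 l" for j l
    have "card K < card (J - {j0})" using insert j0 by auto
    with insert.IH[of "J - {j0}" u] insert.prems obtain c' where
      c': "\<exists>j\<in>J - {j0}. c' j \<noteq> 0" "\<forall>l\<in>K. (\<Sum>j\<in>J - {j0}. c' j * u j l) = 0" by auto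
    define c where "c j = (if j = j0 then - (\<Sum>j\<in>J - {j0}. c' j * v j k) else c' j * v j0 k)" for j
    have relation: "(\<Sum>j\<in>J. c j * v j l) = (\<Sum>j\<in>J - {j0}. c' j * u j l)" for l
    proof -
      have "(\<Sum>j\<in>J. c j * v j l) = c j0 * v j0 l + (\<Sum>j\<in>J - {j0}. c j * v j l)"
        using j0 insert.prems by (simp add: sum.remove)
      also have "(\<Sum>j\<in>J - {j0}. c j * v j l) = (\<Sum>j\<in>J - {j0}. c' j * v j0 k * v j l)"
        by (rule sum.cong) (auto simp: c_def)
      also have "c j0 * v j0 l + \<dots> = (\<Sum>j\<in>J - {j0}. c' j * u j l)"
        by (simp add: c_def u_def sum_distrib_left sum_subtractf algebra_simps)
      finally show ?thesis .
    qed
    have "\<exists>j\<in>J. c j \<noteq> 0"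
    proof -
      from c'(1) obtain j where "j \<in> J - {j0}" "c' j \<noteq> 0" by blast
      with j0 show ?thesis by (intro bexI[of _ j]) (auto simp: c_def)
    qed
    moreover have "\<forall>l\<in>insert k K. (\<Sum>j\<in>J. c j * v j l) = 0"
      using c'(2) by (auto simp: relation u_def)
    ultimately show ?thesis by blast
  qed
qed

lemma two_independent_relations:
  fixes v :: "'j \<Rightarrow> 'k \<Rightarrow> 'f::idom"
  assumes K: "finite K" and J: "finite J" and dim: "card K + 2 \<le> card J"
  shows "\<exists>c d. (\<forall>k\<in>K. (\<Sum>j\<in>J. c j * v j k) = 0) \<and> (\<forall>k\<in>K. (\<Sum>j\<in>J. d j * v j k) = 0)
           \<and> (\<forall>l m. (\<forall>j\<in>J. l * c j + m * d j = 0) \<longrightarrow> l = 0 \<and> m = 0)"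
proof -
  obtain c j0 where c: "\<forall>k\<in>K. (\<Sum>j\<in>J. c j * v j k) = 0" and j0: "j0 \<in> J" "c j0 \<noteq> 0"
    using exists_nontrivial_relation[OF K J] dim by fastforce
  have "card K < card (J - {j0})" using dim J j0 by auto
  then obtain d j1 where d: "\<forall>k\<in>K. (\<Sum>j\<in>J - {j0}. d j * v j k) = 0"
    and j1: "j1 \<in> J - {j0}" "d j1 \<noteq> 0"
    using exists_nontrivial_relation[OF K, of "J - {j0}" v] J by blast
  define d' where "d' j = (if j = j0 then 0 else d j)" for j
  have "\<forall>k\<in>K. (\<Sum>j\<in>J. d' j * v j k) = 0"
    using d J j0 by (simp add: sum.remove d'_def if_distrib sum.If_cases Diff_eq Int_commute)
  moreover have "l = 0 \<and> m = 0" if "\<forall>j\<in>J. l * c j + m * d' j = 0" for l m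
    using that[rule_format, OF j0(1)] that[rule_format, of j1] j0 j1 by (auto simp: d'_def)
  ultimately show ?thesis using c by blast
qed

lemma real_independent_if_int_independent:
  fixes \<alpha> \<beta> :: "'t \<Rightarrow> int" and a b :: real
  assumes int_indep: "\<forall>l m. (\<forall>t\<in>T. l * \<alpha> t + m * \<beta> t = 0) \<longrightarrow> l = 0 \<and> m = 0"
    and rel: "\<forall>t\<in>T. a * \<alpha> t + b * \<beta> t = 0"
  shows "a = 0 \<and> b = 0"
proof (rule ccontr)
  assume ab: "\<not> (a = 0 \<and> b = 0)"
  \<comment> \<open>A nonzero real relation forces all 2x2 minors to vanish, and these give an integer relation.\<close>
  have minor: "\<alpha> t * \<beta> s = \<alpha> s * \<beta> t" if "t \<in> T" "s \<in> T" for t s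
  proof -
    let ?det = "real_of_int (\<alpha> t * \<beta> s - \<alpha> s * \<beta> t)"
    have "a * ?det = \<beta> s * (a * \<alpha> t + b * \<beta> t) - \<beta> t * (a * \<alpha> s + b * \<beta> s)"
      "b * ?det = \<alpha> t * (a * \<alpha> s + b * \<beta> s) - \<alpha> s * (a * \<alpha> t + b * \<beta> t)"
      by (simp_all add: algebra_simps)
    with rel that ab have "?det = 0" by auto
    then show ?thesis by (simp only: of_int_eq_0_iff)
  qed
  obtain t0 where t0: "t0 \<in> T" "\<alpha> t0 \<noteq> 0"
    using int_indep[rule_format, of 1 0] by auto
  have "\<forall>t\<in>T. \<beta> t0 * \<alpha> t + (- \<alpha> t0) * \<beta> t = 0"
    using minor t0(1) by (simp add: algebra_simps)
  then show False using int_indep[rule_format, of "\<beta> t0" "- \<alpha> t0"] t0(2) by simp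
qed

lemma bform_cong:
  assumes "\<forall>i\<in>I. x i = x' i" "\<forall>i\<in>I. y i = y' i"
  shows "bform G I x y = bform G I x' y'"
  unfolding bform_def using assms by (intro sum.cong refl) auto

lemma bform_zero_left:
  assumes "\<forall>i\<in>I. x i = 0"
  shows "bform G I x y = 0"
  unfolding bform_def using assms by simp

lemma bform_pullback:
  fixes x y :: "'i \<Rightarrow> 'r::comm_ring_1"
  assumes "\<forall>i\<in>I. \<forall>j\<in>I. G i j = bform H K (f i) (f j)"
  shows "bform G I x y =
    bform H K (\<lambda>k. \<Sum>i\<in>I. x i * of_int (f i k)) (\<lambda>l. \<Sum>j\<in>I. y j * of_int (f j l))"
proof -
  let ?t = "\<lambda>i j k l. x i * of_int (f i k) * of_int (H k l) * (y j * of_int (f j l))"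
  have "bform G I x y = (\<Sum>i\<in>I. \<Sum>j\<in>I. \<Sum>k\<in>K. \<Sum>l\<in>K. ?t i j k l)"
    unfolding bform_def using assms
    by (intro sum.cong refl) (simp add: bform_def of_int_sum sum_distrib_left sum_distrib_right mult_ac)
  also have "\<dots> = (\<Sum>i\<in>I. \<Sum>k\<in>K. \<Sum>j\<in>I. \<Sum>l\<in>K. ?t i j k l)"
    by (intro sum.cong refl sum.swap)
  also have "\<dots> = (\<Sum>i\<in>I. \<Sum>k\<in>K. \<Sum>l\<in>K. \<Sum>j\<in>I. ?t i j k l)"
    by (intro sum.cong refl sum.swap)
  also have "\<dots> = (\<Sum>k\<in>K. \<Sum>i\<in>I. \<Sum>l\<in>K. \<Sum>j\<in>I. ?t i j k l)"
    by (rule sum.swap)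
  also have "\<dots> = (\<Sum>k\<in>K. \<Sum>l\<in>K. \<Sum>i\<in>I. \<Sum>j\<in>I. ?t i j k l)"
    by (intro sum.cong refl sum.swap)
  also have "\<dots> = bform H K (\<lambda>k. \<Sum>i\<in>I. x i * of_int (f i k)) (\<lambda>l. \<Sum>j\<in>I. y j * of_int (f j l))"
    unfolding bform_def by (simp add: sum_distrib_left sum_distrib_right) (intro sum.cong refl sum.swap)
  finally show ?thesis .
qed

lemma bform_unitv_left:
  assumes "finite V" "v \<in> V"
  shows "bform G V (unitv v :: 'i \<Rightarrow> 'r::comm_ring_1) y = (\<Sum>j\<in>V. of_int (G v j) * y j)"
proof -
  have "bform G V (unitv v) y = (\<Sum>i\<in>V. if i = v then (\<Sum>j\<in>V. of_int (G v j) * y j) else (0::'r))"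
    unfolding bform_def unitv_def by (intro sum.cong refl) auto
  then show ?thesis using assms by simp
qed

lemma bform_unitv_right:
  assumes "finite V" "v \<in> V"
  shows "bform G V x (unitv v :: 'i \<Rightarrow> 'r::comm_ring_1) = (\<Sum>i\<in>V. x i * of_int (G i v))"
proof -
  have "bform G V x (unitv v) = (\<Sum>i\<in>V. \<Sum>j\<in>V. if j = v then x i * of_int (G i v) else (0::'r))"
    unfolding bform_def unitv_def by (intro sum.cong refl) auto
  then show ?thesis using assms by simp
qed

lemma bform_expand_left:
  assumes "finite V"
  shows "bform G V (x :: 'i \<Rightarrow> 'r::comm_ring_1) y = (\<Sum>i\<in>V. x i * bform G V (unitv i) y)"
proof -
  have "(\<Sum>i\<in>V. x i * bform G V (unitv i) y) = (\<Sum>i\<in>V. x i * (\<Sum>j\<in>V. of_int (G i j) * y j))"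
    using assms by (intro sum.cong refl) (simp add: bform_unitv_left)
  then show ?thesis by (simp add: bform_def sum_distrib_left mult.assoc)
qed

lemma lat_rank_has_independent_family:
  assumes "finite I"
  shows "\<exists>xs. lat_independent G I (lat_rank G I) xs"
proof -
  let ?P = "\<lambda>k. \<exists>xs. lat_independent G I k xs"
  have bounded: "k \<le> card I" if "?P k" for k
  proof (rule ccontr)
    assume "\<not> k \<le> card I"
    then have "card I < card {..<k}" by simp
    from that obtain xs where xs: "lat_independent G I k xs" by blast
    obtain c where "\<exists>j\<in>{..<k}. c j \<noteq> 0" "\<forall>i\<in>I. (\<Sum>j\<in>{..<k}. c j * xs j i) = 0"
      using exists_nontrivial_relation[OF assms finite_lessThan \<open>card I < card {..<k}\<close>] by blast
    then have "\<forall>y. bform G I (\<lambda>i. \<Sum>j<k. c j * xs j i) y = 0"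
      by (simp add: bform_zero_left)
    with xs have "\<forall>j<k. c j = 0" by (simp add: lat_independent_def)
    with \<open>\<exists>j\<in>{..<k}. c j \<noteq> 0\<close> show False by auto
  qed
  have "?P 0" by (simp add: lat_independent_def)
  then have "?P (Greatest ?P)" using bounded by (rule GreatestI_nat)
  moreover have "lat_rank G I = Greatest ?P"
    unfolding lat_rank_def lat_independent_def ..
  ultimately show ?thesis by simp
qed

lemma positive_family_le_pos_index:
  assumes I: "finite I" and xs: "positive_family G I k xs"
  shows "k \<le> pos_index G I"
proof -
  let ?P = "\<lambda>k. \<exists>xs. positive_family G I k xs"
  have bounded: "k \<le> card I" if "?P k" for k
  proof (rule ccontr)
    assume "\<not> k \<le> card I"
    then have "card I < card {..<k}" by simp
    from that obtain xs where xs: "positive_family G I k xs" by blast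
    obtain c where c: "\<exists>j\<in>{..<k}. c j \<noteq> 0" "\<forall>i\<in>I. (\<Sum>j\<in>{..<k}. c j * xs j i) = 0"
      using exists_nontrivial_relation[OF I finite_lessThan \<open>card I < card {..<k}\<close>] by blast
    then have "bform G I (\<lambda>i. \<Sum>j<k. c j * xs j i) (\<lambda>i. \<Sum>j<k. c j * xs j i) = 0"
      by (simp add: bform_zero_left)
    with xs c(1) show False by (auto simp: positive_family_def)
  qed
  have "k \<le> Greatest ?P" using xs bounded by (intro Greatest_le_nat) auto
  moreover have "pos_index G I = Greatest ?P"
    unfolding pos_index_def positive_family_def ..
  ultimately show ?thesis by simp
qed

lemma lat_independent_image:
  fixes f :: "'i \<Rightarrow> 'k \<Rightarrow> int"
  assumes f: "\<forall>i\<in>I. \<forall>j\<in>I. G i j = bform H K (f i) (f j)"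
    and x: "lat_independent G I n x"
    and e: "\<forall>k\<in>K. (\<Sum>j<n. e j * (\<Sum>i\<in>I. x j i * f i k)) = 0"
  shows "\<forall>j<n. e j = 0"
proof -
  have "bform G I (\<lambda>i. \<Sum>j<n. e j * x j i) y = 0" for y
  proof -
    have "(\<Sum>i\<in>I. (\<Sum>j<n. e j * x j i) * f i k) = (\<Sum>j<n. e j * (\<Sum>i\<in>I. x j i * f i k))" for k
      by (simp add: sum_distrib_left sum_distrib_right mult.assoc) (rule sum.swap)
    with e show ?thesis
      by (simp add: bform_pullback[OF f, of "\<lambda>i. \<Sum>j<n. e j * x j i" y] bform_zero_left)
  qed
  then show ?thesis using x unfolding lat_independent_def by simp
qed

lemma spans_share_rank_two_sublattice:
  fixes w p :: "nat \<Rightarrow> 'k \<Rightarrow> int"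
  assumes K: "finite K"
    and w: "\<And>e. \<forall>k\<in>K. (\<Sum>j<n. e j * w j k) = 0 \<Longrightarrow> \<forall>j<n. e j = 0"
    and dim: "card K + 2 \<le> n + r"
  shows "\<exists>c d \<alpha> \<beta>. (\<forall>k\<in>K. (\<Sum>j<n. c j * w j k) = (\<Sum>t<r. \<alpha> t * p t k))
            \<and> (\<forall>k\<in>K. (\<Sum>j<n. d j * w j k) = (\<Sum>t<r. \<beta> t * p t k))
            \<and> (\<forall>l m. (\<forall>t\<in>{..<r}. l * \<alpha> t + m * \<beta> t = 0) \<longrightarrow> l = 0 \<and> m = 0)"
proof -
  define v where "v j = (if j < n then w j else p (j - n))" for j
  have "card K + 2 \<le> card {..<n + r}" using dim by simp
  from two_independent_relations[where v = v, OF K finite_lessThan this] obtain c d where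
    c: "\<forall>k\<in>K. (\<Sum>j<n + r. c j * v j k) = 0" and d: "\<forall>k\<in>K. (\<Sum>j<n + r. d j * v j k) = 0"
    and cd: "\<forall>l m. (\<forall>j\<in>{..<n + r}. l * c j + m * d j = 0) \<longrightarrow> l = 0 \<and> m = 0"
    by blast
  have split: "(\<Sum>j<n + r. e j * v j k) = (\<Sum>j<n. e j * w j k) + (\<Sum>t<r. e (n + t) * p t k)" for e k
    by (simp add: sum_lessThan_add_split v_def)
  have head_relation: "(\<Sum>j<n. e j * w j k) = (\<Sum>t<r. - e (n + t) * p t k)"
    if "\<forall>k\<in>K. (\<Sum>j<n + r. e j * v j k) = 0" "k \<in> K" for e k
    using that split[of e k] by (simp add: sum_negf)
  have tails_independent: "l = 0 \<and> m = 0"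
    if tail: "\<forall>t\<in>{..<r}. l * - c (n + t) + m * - d (n + t) = 0" for l m
  proof -
    define e where "e j = l * c j + m * d j" for j
    have e_tail: "e (n + t) = 0" if "t < r" for t
      using tail[rule_format, of t] that by (simp add: e_def algebra_simps)
    have "(\<Sum>j<n. e j * w j k) = 0" if "k \<in> K" for k
    proof -
      have "(\<Sum>j<n + r. e j * v j k) = l * (\<Sum>j<n + r. c j * v j k) + m * (\<Sum>j<n + r. d j * v j k)"
        by (simp add: e_def sum.distrib sum_distrib_left algebra_simps)
      with c d that have "(\<Sum>j<n + r. e j * v j k) = 0" by simp
      then show ?thesis using e_tail by (simp add: split)
    qed
    then have "\<forall>j<n. e j = 0" using w by blast
    moreover have "e j = 0" if "n \<le> j" "j < n + r" for j
      using e_tail[of "j - n"] that by simp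
    ultimately have "\<forall>j\<in>{..<n + r}. e j = 0" by (meson lessThan_iff not_le)
    then show ?thesis using cd[rule_format, of l m] by (simp add: e_def)
  qed
  show ?thesis
    by (insert head_relation[OF c] head_relation[OF d] tails_independent,
        rule exI[of _ c], rule exI[of _ d], rule exI[of _ "\<lambda>t. - c (n + t)"],
        rule exI[of _ "\<lambda>t. - d (n + t)"]) (simp, blast)
qed

lemma embedding_positive_plane:
  fixes f :: "'i \<Rightarrow> 'k \<Rightarrow> int" and x :: "nat \<Rightarrow> 'i \<Rightarrow> int" and p :: "nat \<Rightarrow> 'k \<Rightarrow> int"
  assumes K: "finite K"
    and f: "\<forall>i\<in>I. \<forall>j\<in>I. G i j = bform H K (f i) (f j)"
    and x: "lat_independent G I n x"
    and p: "positive_family H K r (\<lambda>t k. of_int (p t k))"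
    and dim: "card K + 2 \<le> n + r"
  shows "\<exists>xs. positive_family G I 2 xs"
proof -
  define w where "w j k = (\<Sum>i\<in>I. x j i * f i k)" for j k
  obtain c d \<alpha> \<beta> where
    c: "\<forall>k\<in>K. (\<Sum>j<n. c j * w j k) = (\<Sum>t<r. \<alpha> t * p t k)"
    and d: "\<forall>k\<in>K. (\<Sum>j<n. d j * w j k) = (\<Sum>t<r. \<beta> t * p t k)"
    and \<alpha>\<beta>: "\<forall>l m. (\<forall>t\<in>{..<r}. l * \<alpha> t + m * \<beta> t = 0) \<longrightarrow> l = 0 \<and> m = 0"
    using spans_share_rank_two_sublattice[OF K _ dim, of w p] lat_independent_image[OF f x]
    unfolding w_def by blast
  define u where "u a b i = (\<Sum>j<n. (a * of_int (c j) + b * of_int (d j)) * of_int (x j i))"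
    for a b :: real and i
  have image_u: "(\<Sum>i\<in>I. u a b i * of_int (f i k)) = (\<Sum>t<r. (a * \<alpha> t + b * \<beta> t) * of_int (p t k))"
    if "k \<in> K" for a b k
  proof -
    have "(\<Sum>i\<in>I. u a b i * of_int (f i k)) =
        a * of_int (\<Sum>j<n. c j * w j k) + b * of_int (\<Sum>j<n. d j * w j k)"
      unfolding u_def w_def
      by (simp add: sum_distrib_left sum_distrib_right sum.distrib algebra_simps)
        (subst (1 2) sum.swap, rule refl)
    then show ?thesis
      using c d that by (simp add: sum_distrib_left sum_distrib_right sum.distrib algebra_simps)
  qed
  have "positive_family G I 2 (\<lambda>j. if j = 0 then u 1 0 else u 0 1)"
    unfolding positive_family_def
  proof (intro allI impI)
    fix a :: "nat \<Rightarrow> real"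
    assume "\<exists>j<2. a j \<noteq> 0"
    then obtain j where "j < 2" "a j \<noteq> 0" by blast
    moreover from \<open>j < 2\<close> have "j = 0 \<or> j = 1" by auto
    ultimately have ab: "\<not> (a 0 = 0 \<and> a 1 = 0)" by auto
    define \<gamma> where "\<gamma> t = a 0 * of_int (\<alpha> t) + a 1 * of_int (\<beta> t)" for t
    have "\<exists>t<r. \<gamma> t \<noteq> 0"
    proof (rule ccontr)
      assume "\<not> (\<exists>t<r. \<gamma> t \<noteq> 0)"
      then have "\<forall>t\<in>{..<r}. a 0 * of_int (\<alpha> t) + a 1 * of_int (\<beta> t) = 0"
        by (simp add: \<gamma>_def)
      from real_independent_if_int_independent[OF \<alpha>\<beta> this] ab show False by simp
    qed
    then have "bform H K (\<lambda>k. \<Sum>t<r. \<gamma> t * of_int (p t k)) (\<lambda>k. \<Sum>t<r. \<gamma> t * of_int (p t k)) > 0"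
      using p[unfolded positive_family_def, rule_format, of \<gamma>] by simp
    also have "bform H K (\<lambda>k. \<Sum>t<r. \<gamma> t * of_int (p t k)) (\<lambda>k. \<Sum>t<r. \<gamma> t * of_int (p t k)) =
        bform H K (\<lambda>k. \<Sum>i\<in>I. u (a 0) (a 1) i * of_int (f i k))
          (\<lambda>k. \<Sum>i\<in>I. u (a 0) (a 1) i * of_int (f i k))"
      by (rule bform_cong) (simp_all add: image_u \<gamma>_def)
    also have "\<dots> = bform G I (u (a 0) (a 1)) (u (a 0) (a 1))"
      by (rule bform_pullback[OF f, symmetric])
    also have "u (a 0) (a 1) = (\<lambda>i. \<Sum>j<2. a j * (if j = 0 then u 1 0 else u 0 1) i)"
      by (simp add: fun_eq_iff u_def numeral_2_eq_2 sum_distrib_left algebra_simps sum.distrib)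
    finally show "bform G I (\<lambda>i. \<Sum>j<2. a j * (if j = 0 then u 1 0 else u 0 1) i)
        (\<lambda>i. \<Sum>j<2. a j * (if j = 0 then u 1 0 else u 0 1) i) > 0" .
  qed
  then show ?thesis by blast
qed

lemma k3_positive_family:
  "positive_family k3gram {..<22} 3 (\<lambda>t k. of_int (if k = 2 * t \<or> k = 2 * t + 1 then 1 else 0))"
  unfolding positive_family_def
proof (intro allI impI)
  fix c :: "nat \<Rightarrow> real"
  assume "\<exists>j<3. c j \<noteq> 0"
  then obtain j where "j < 3" "c j \<noteq> 0" by blast
  moreover from \<open>j < 3\<close> have "j = 0 \<or> j = 1 \<or> j = 2" by auto
  ultimately have pos: "c 0 ^ 2 + c 1 ^ 2 + c 2 ^ 2 > 0"
    by (elim disjE) (simp_all add: add_pos_nonneg add_nonneg_pos)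
  define q where "q k = (\<Sum>t<3. c t * of_int (if k = 2 * t \<or> k = 2 * t + 1 then 1 else 0))" for k
  have three: "{..<3::nat} = {0, 1, 2}" by auto
  have q_outside: "q k = 0" if "k \<in> {6..<22}" for k
    using that by (auto simp: q_def three)
  have "bform k3gram {..<22} q q = (\<Sum>i<22. \<Sum>j<6. q i * of_int (k3gram i j) * q j)"
    unfolding bform_def using q_outside by (intro sum.cong refl sum.mono_neutral_right) auto
  also have "\<dots> = (\<Sum>i<6. \<Sum>j<6. q i * of_int (k3gram i j) * q j)"
    using q_outside by (intro sum.mono_neutral_right) auto
  also have "\<dots> = 2 * (c 0 ^ 2 + c 1 ^ 2 + c 2 ^ 2)"
    by (simp add: q_def three k3gram_def lessThan_nat_numeral power2_eq_square algebra_simps)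
  finally show "bform k3gram {..<22} q q > 0" using pos by simp
qed

lemma ggram_sym:
  assumes "\<forall>u v. E u v \<longrightarrow> E v u"
  shows "ggram E u v = ggram E v u"
  using assms unfolding ggram_def by auto

lemma bform_hgram:
  fixes x y :: "'a option \<Rightarrow> 'r::comm_ring_1"
  assumes "finite V"
  shows "bform (hgram E D) (hindex V) x y =
     x None * of_int (2 * D) * y None + x None * (\<Sum>v\<in>V. y (Some v)) + (\<Sum>v\<in>V. x (Some v)) * y None
     + bform (ggram E) V (\<lambda>v. x (Some v)) (\<lambda>v. y (Some v))"
proof -
  have "None \<notin> Some ` V" "inj_on Some V" by auto
  then show ?thesis
    unfolding bform_def hindex_def using assms
    by (simp add: sum.reindex hgram_def sum.distrib sum_distrib_left sum_distrib_right algebra_simps)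
qed

lemma intrinsic_polarization_of_kernel_vector:
  fixes z :: "'a option \<Rightarrow> int"
  assumes V: "finite V" and sym: "\<forall>u v. E u v \<longrightarrow> E v u"
    and m: "z None \<noteq> 0" and ker: "\<forall>y. bform (hgram E D) (hindex V) z y = 0"
  shows "\<exists>hG :: 'a \<Rightarrow> rat.
           (\<forall>v\<in>V. bform (ggram E) V (unitv v) hG = 1) \<and> 2 * of_int D = bform (ggram E) V hG hG"
proof -
  define m where "m = z None"
  define X where "X = (\<lambda>v. z (Some v))"
  \<comment> \<open>The witness is hG = -X/m; pairing the kernel vector m h + X with h and with each vertex
      gives the two equations it needs.\<close>
  have pair_h: "m * (2 * D) + (\<Sum>v\<in>V. X v) = 0"
  proof -
    have "bform (ggram E) V (\<lambda>v. z (Some v)) (\<lambda>v. unitv None (Some v)) = 0"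
      by (simp add: bform_def unitv_def)
    with ker[rule_format, of "unitv None"] show ?thesis
      unfolding bform_hgram[OF V] m_def X_def by (simp add: unitv_def)
  qed
  have pair_vertex: "(\<Sum>i\<in>V. X i * ggram E i v) = - m" if "v \<in> V" for v
  proof -
    have "(\<lambda>u. unitv (Some v) (Some u) :: int) = unitv v" by (auto simp: unitv_def)
    moreover have "(\<Sum>u\<in>V. unitv v u :: int) = 1" using that V by (simp add: unitv_def)
    ultimately have "m + bform (ggram E) V X (unitv v) = 0"
      using ker[rule_format, of "unitv (Some v)"]
      unfolding bform_hgram[OF V] m_def X_def by (simp add: unitv_def)
    then show ?thesis using bform_unitv_right[OF V that, of "ggram E" X] by simp
  qed
  define hG where "hG v = - of_int (X v) / (of_int m :: rat)" for v
  have m0: "(of_int m :: rat) \<noteq> 0" using m by (simp add: m_def)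
  have hG_vertex: "bform (ggram E) V (unitv v) hG = 1" if "v \<in> V" for v
  proof -
    have "bform (ggram E) V (unitv v) hG = - of_int (\<Sum>j\<in>V. X j * ggram E j v) / of_int m"
      unfolding bform_unitv_left[OF V that] hG_def
      by (simp add: sum_divide_distrib[symmetric] ggram_sym[OF sym, of v] mult.commute sum_negf)
    then show ?thesis using pair_vertex[OF that] m0 by simp
  qed
  have "bform (ggram E) V hG hG = (\<Sum>i\<in>V. hG i)"
    using hG_vertex by (subst bform_expand_left[OF V]) simp
  also have "\<dots> = - of_int (\<Sum>v\<in>V. X v) / of_int m"
    unfolding hG_def by (simp add: sum_divide_distrib[symmetric] sum_negf)
  also have "\<dots> = 2 * of_int D"
    using pair_h m0 by (simp add: eq_neg_iff_add_eq_0[symmetric] field_simps)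
  finally show ?thesis using hG_vertex by (intro exI[of _ hG]) simp
qed

lemma lat_independent_adjoin_polarization:
  fixes xs :: "nat \<Rightarrow> 'a \<Rightarrow> int"
  assumes V: "finite V" and xs: "lat_independent (ggram E) V n xs"
    and ker: "\<forall>z :: 'a option \<Rightarrow> int. (\<forall>y. bform (hgram E D) (hindex V) z y = 0) \<longrightarrow> z None = 0"
  shows "lat_independent (hgram E D) (hindex V) (Suc n)
           (\<lambda>j p. if j = n then unitv None p else case p of None \<Rightarrow> 0 | Some v \<Rightarrow> xs j v)"
    (is "lat_independent _ _ _ ?x")
proof -
  have "\<forall>j<Suc n. c j = 0"
    if z_ker: "\<forall>y. bform (hgram E D) (hindex V) z y = 0" and z: "z = (\<lambda>p. \<Sum>j<Suc n. c j * ?x j p)"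
    for c z
  proof -
    have "z None = c n" by (simp add: z unitv_def)
    with spec[OF ker, of z] z_ker have cn: "c n = 0" by simp
    have z_vertex: "z (Some v) = (\<Sum>j<n. c j * xs j v)" for v
      using cn by (simp add: z unitv_def)
    have "bform (ggram E) V (\<lambda>v. \<Sum>j<n. c j * xs j v) y = 0" for y
    proof -
      have "bform (hgram E D) (hindex V) z (case_option 0 y) = 0" using z_ker by simp
      then show ?thesis
        unfolding bform_hgram[OF V] using cn \<open>z None = c n\<close> by (simp add: z_vertex)
    qed
    with xs have "\<forall>j<n. c j = 0" unfolding lat_independent_def by blast
    with cn show ?thesis by (simp add: less_Suc_eq)
  qed
  then show ?thesis unfolding lat_independent_def by blast
qed

theorem corollary2p9:
  fixes V :: "'a set" and E :: "'a \<Rightarrow> 'a \<Rightarrow> bool" and D :: int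
  assumes "finite V"
    and "\<forall>u v. E u v \<longrightarrow> E v u"
    and "\<forall>u. \<not> E u u"
    and "pos_index (ggram E) V = 1"
    and "lat_rank (ggram E) V = 20"
    and "D \<ge> 2"
    and "geometric (hgram E D) (hindex V) (unitv None) D"
  shows "\<exists>hG :: 'a \<Rightarrow> rat.
           (\<forall>v\<in>V. bform (ggram E) V (unitv v) hG = 1) \<and>
           2 * of_int D = bform (ggram E) V hG hG"
proof (rule ccontr)
  assume no_hG: "\<not> ?thesis"
  let ?I = "hindex V" and ?G = "hgram E D"
  have I: "finite ?I" using assms(1) by (simp add: hindex_def)
  from assms(7) have hyperbolic: "pos_index ?G ?I = 1"
    unfolding geometric_def admissible_def polarized_def by blast
  from assms(7) obtain f where "\<forall>i\<in>?I. \<forall>j\<in>?I. bform k3gram {..<22} (f i) (f j) = ?G i j"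
    unfolding geometric_def prim_embeds_K3_def by blast
  then have isometry: "\<forall>i\<in>?I. \<forall>j\<in>?I. ?G i j = bform k3gram {..<22} (f i) (f j)" by simp
  obtain xs where "lat_independent (ggram E) V 20 xs"
    using lat_rank_has_independent_family[OF assms(1), of "ggram E"] assms(5) by auto
  moreover have "\<forall>z :: 'a option \<Rightarrow> int. (\<forall>y. bform ?G ?I z y = 0) \<longrightarrow> z None = 0"
    using intrinsic_polarization_of_kernel_vector[OF assms(1,2)] no_hG by blast
  ultimately have "lat_independent ?G ?I 21
      (\<lambda>j p. if j = 20 then unitv None p else case p of None \<Rightarrow> 0 | Some v \<Rightarrow> xs j v)"
    using lat_independent_adjoin_polarization[OF assms(1)] by (simp add: numeral_eq_Suc)
  from embedding_positive_plane[OF finite_lessThan isometry this k3_positive_family]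
  obtain ys where "positive_family ?G ?I 2 ys" by auto
  with hyperbolic show False using positive_family_le_pos_index[OF I] by fastforce
qed

end
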